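(* Let $T>0$, $\mu,\theta>0$, $x_0\in\mathbb R$, $H\in(0,1)$, and let $X$ be the solution of $X_t=x_0-\mu\int_0^tX_s\,ds+\theta B^H_t$, $t\le T$, where $B^H$ is a fractional Brownian motion with Hurst index $H$. Then $\sup_{t\le T}\mathbb{E}X_t^2\le2x_0^2+4\theta^2e^{2\mu T}T^{2H}(1+\mu^2T^2)$, $\sigma_X^2(0,h)\le Ch^{2H}$ for some constant $C$ and all small $h$ (so (C1) holds with $\gamma=H$), and (C2) holds with $\gamma=H$ and $\kappa=\theta$.
   Context: The solution is $X_t=x_0e^{-\mu t}+\theta\int_0^te^{-\mu(t-u)}dB^H_u$ with the integral a pathwise Riemann–Stieltjes integral. $\sigma_X^2(s,t)=\mathbb{E}[X(t)-X(s)]^2$. $\Psi$: continuous $\varphi\colon(0,T]\to[0,\infty)$ with $\varphi(h)\to0$, $L(h):=\varphi(h)/h\to\infty$, $hL(h)^3\to0$ as $h\downarrow0$. (C1): $\sigma_X(0,\delta)=O(\delta^\gamma)$ as $\delta\downarrow0$. (C2): for every $\varphi\in\Psi$, $\sup_{\varphi(\delta)\le t\le T-\delta}\sup_{0<h\le\delta}|\sigma_X(t,t+h)/(\kappa h^\gamma)-1|\to0$ as $\delta\downarrow0$. *)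

theory Defs
  imports "HOL-Probability.Probability" "HOL-Library.Landau_Symbols"
begin

definition fbm_cov :: "real \<Rightarrow> real \<Rightarrow> real \<Rightarrow> real" where
  "fbm_cov H s t = (\<bar>s\<bar> powr (2*H) + \<bar>t\<bar> powr (2*H) - \<bar>t - s\<bar> powr (2*H)) / 2"

text \<open>B is a fractional Brownian motion with Hurst index H on the time set [0,T]
  (restriction of an fBm to [0,T]): a centered Gaussian process with covariance fbm_cov H,
  given through the laws of all finite linear combinations (Cramer--Wold), and with
  continuous sample paths.\<close>
definition is_fBm :: "'a measure \<Rightarrow> real \<Rightarrow> real \<Rightarrow> (real \<Rightarrow> 'a \<Rightarrow> real) \<Rightarrow> bool" where
  "is_fBm M H T B \<longleftrightarrow>
     (\<forall>t\<in>{0..T}. B t \<in> borel_measurable M) \<and>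
     (\<forall>\<omega>\<in>space M. continuous_on {0..T} (\<lambda>t. B t \<omega>)) \<and>
     (\<forall>(I::nat set) (ts::nat \<Rightarrow> real) (c::nat \<Rightarrow> real).
        finite I \<longrightarrow> (\<forall>i\<in>I. ts i \<in> {0..T}) \<longrightarrow>
        (let v = (\<Sum>i\<in>I. \<Sum>j\<in>I. c i * c j * fbm_cov H (ts i) (ts j));
             Y = (\<lambda>\<omega>. \<Sum>i\<in>I. c i * B (ts i) \<omega>)
         in (v = 0 \<longrightarrow> (AE \<omega> in M. Y \<omega> = 0)) \<and>
            (v > 0 \<longrightarrow> distributed M lborel Y (\<lambda>x. ennreal (normal_density 0 (sqrt v) x)))))"

definition sigma2 :: "'a measure \<Rightarrow> (real \<Rightarrow> 'a \<Rightarrow> real) \<Rightarrow> real \<Rightarrow> real \<Rightarrow> real" where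
  "sigma2 M X s t = integral\<^sup>L M (\<lambda>\<omega>. (X t \<omega> - X s \<omega>)^2)"

definition sigmaX :: "'a measure \<Rightarrow> (real \<Rightarrow> 'a \<Rightarrow> real) \<Rightarrow> real \<Rightarrow> real \<Rightarrow> real" where
  "sigmaX M X s t = sqrt (sigma2 M X s t)"

definition Psi :: "real \<Rightarrow> (real \<Rightarrow> real) set" where
  "Psi T = {\<phi>. continuous_on {0<..T} \<phi> \<and> (\<forall>h\<in>{0<..T}. \<phi> h \<ge> 0) \<and>
     (\<phi> \<longlongrightarrow> 0) (at_right 0) \<and>
     filterlim (\<lambda>h. \<phi> h / h) at_top (at_right 0) \<and>
     ((\<lambda>h. h * (\<phi> h / h)^3) \<longlongrightarrow> 0) (at_right 0)}"

definition cond_C1 :: "'a measure \<Rightarrow> (real \<Rightarrow> 'a \<Rightarrow> real) \<Rightarrow> real \<Rightarrow> bool" where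
  "cond_C1 M X \<gamma> \<longleftrightarrow> (\<lambda>\<delta>. sigmaX M X 0 \<delta>) \<in> O[at_right 0](\<lambda>\<delta>. \<delta> powr \<gamma>)"

text \<open>Condition (C2) with exponent gamma and constant kappa; "sup ... tends to 0 as delta
  decreases to 0" is written out with epsilon.\<close>
definition cond_C2 :: "'a measure \<Rightarrow> (real \<Rightarrow> 'a \<Rightarrow> real) \<Rightarrow> real \<Rightarrow> real \<Rightarrow> real \<Rightarrow> bool" where
  "cond_C2 M X T \<gamma> \<kappa> \<longleftrightarrow> (\<forall>\<phi>\<in>Psi T. \<forall>\<epsilon>>0. eventually (\<lambda>\<delta>.
      \<forall>t h. \<phi> \<delta> \<le> t \<and> t \<le> T - \<delta> \<and> 0 < h \<and> h \<le> \<delta> \<longrightarrow>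
        \<bar>sigmaX M X t (t + h) / (\<kappa> * h powr \<gamma>) - 1\<bar> \<le> \<epsilon>) (at_right 0))"

end

theory Submission
  imports Defs
begin

(*
  Variation of constants solves the equation pathwise:
    X t = x0 exp(-mu t) + theta B t - theta mu int_0^t exp(-mu (t - u)) B u du.
  Since E (B u)^2 = u^(2H) <= T^(2H), and the second moment of a pathwise integral over [a,b] is at
  most (b - a)^2 times the largest second moment of the integrand (Riemann sums and Fatou's lemma),
  this yields the uniform bound K on E (X t)^2.
  The increment X (t + h) - X t = theta (B (t + h) - B t) - mu int_t^(t+h) X is an fBm increment of
  L^2-norm exactly theta h^H minus a drift term of L^2-norm at most mu h sqrt K. By the triangle
  inequality in L^2, sigma_X(t, t + h) differs from theta h^H by at most mu sqrt K h, uniformly in t;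
  the relative error is O(h^(1-H)) with H < 1, which gives (C1) and (C2).
*)

lemma discriminant_le_of_quadratic_nonneg:
  fixes a b c :: real
  assumes "0 \<le> c" and "\<And>x. 0 \<le> a - 2 * x * b + x^2 * c"
  shows "b^2 \<le> a * c"
proof (cases "c = 0")
  case True
  have "b = 0"
  proof (rule ccontr)
    assume "b \<noteq> 0"
    then show False using assms(2)[of "(a + 1) / (2 * b)"] True by (simp add: field_simps)
  qed
  then show ?thesis using True by simp
next
  case False
  have "0 \<le> a - 2 * (b / c) * b + (b / c)^2 * c" by (rule assms(2))
  also have "\<dots> = (a * c - b^2) / c" using False by (simp add: field_simps power2_eq_square)
  finally show ?thesis using assms(1) False by (simp add: zero_le_divide_iff)
qed

lemma integrable_square_mult:
  fixes D R :: "'a \<Rightarrow> real"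
  assumes "D \<in> borel_measurable M" "R \<in> borel_measurable M"
    and "integrable M (\<lambda>\<omega>. (D \<omega>)^2)" "integrable M (\<lambda>\<omega>. (R \<omega>)^2)"
  shows "integrable M (\<lambda>\<omega>. D \<omega> * R \<omega>)"
proof (rule Bochner_Integration.integrable_bound)
  show "integrable M (\<lambda>\<omega>. (D \<omega>)^2 + (R \<omega>)^2)" using assms by simp
  show "AE \<omega> in M. norm (D \<omega> * R \<omega>) \<le> norm ((D \<omega>)^2 + (R \<omega>)^2)"
  proof (intro AE_I2)
    fix \<omega>
    have "2 * \<bar>D \<omega>\<bar> * \<bar>R \<omega>\<bar> \<le> (D \<omega>)^2 + (R \<omega>)^2"
      using sum_squares_bound[of "\<bar>D \<omega>\<bar>" "\<bar>R \<omega>\<bar>"] by simp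
    moreover have "0 \<le> \<bar>D \<omega>\<bar> * \<bar>R \<omega>\<bar>" by simp
    ultimately have "\<bar>D \<omega>\<bar> * \<bar>R \<omega>\<bar> \<le> (D \<omega>)^2 + (R \<omega>)^2" by linarith
    then show "norm (D \<omega> * R \<omega>) \<le> norm ((D \<omega>)^2 + (R \<omega>)^2)" by (simp add: abs_mult)
  qed
qed (use assms in measurable)

lemma integral_mult_le_Cauchy_Schwarz:
  fixes D R :: "'a \<Rightarrow> real"
  assumes "D \<in> borel_measurable M" "R \<in> borel_measurable M"
    and "integrable M (\<lambda>\<omega>. (D \<omega>)^2)" "integrable M (\<lambda>\<omega>. (R \<omega>)^2)"
  shows "(\<integral>\<omega>. D \<omega> * R \<omega> \<partial>M)^2 \<le> (\<integral>\<omega>. (D \<omega>)^2 \<partial>M) * (\<integral>\<omega>. (R \<omega>)^2 \<partial>M)"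
proof (rule discriminant_le_of_quadratic_nonneg)
  show "0 \<le> (\<integral>\<omega>. (R \<omega>)^2 \<partial>M)" by simp
  fix x :: real
  have DR: "integrable M (\<lambda>\<omega>. D \<omega> * R \<omega>)" by (rule integrable_square_mult[OF assms])
  have "0 \<le> (\<integral>\<omega>. (D \<omega> - x * R \<omega>)^2 \<partial>M)" by simp
  also have "\<dots> = (\<integral>\<omega>. (D \<omega>)^2 - 2 * x * (D \<omega> * R \<omega>) + x^2 * (R \<omega>)^2 \<partial>M)"
    by (simp add: power2_eq_square algebra_simps)
  also have "\<dots> = (\<integral>\<omega>. (D \<omega>)^2 \<partial>M) - 2 * x * (\<integral>\<omega>. D \<omega> * R \<omega> \<partial>M) + x^2 * (\<integral>\<omega>. (R \<omega>)^2 \<partial>M)"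
    using assms DR by simp
  finally show "0 \<le> \<dots>" .
qed

lemma sqrt_integral_square_diff_le:
  fixes D R :: "'a \<Rightarrow> real"
  assumes "D \<in> borel_measurable M" "R \<in> borel_measurable M"
    and "integrable M (\<lambda>\<omega>. (D \<omega>)^2)" "integrable M (\<lambda>\<omega>. (R \<omega>)^2)"
  shows "\<bar>sqrt (\<integral>\<omega>. (D \<omega> - R \<omega>)^2 \<partial>M) - sqrt (\<integral>\<omega>. (D \<omega>)^2 \<partial>M)\<bar> \<le> sqrt (\<integral>\<omega>. (R \<omega>)^2 \<partial>M)"
proof -
  define d where "d = sqrt (\<integral>\<omega>. (D \<omega>)^2 \<partial>M)"
  define r where "r = sqrt (\<integral>\<omega>. (R \<omega>)^2 \<partial>M)"
  define p where "p = (\<integral>\<omega>. D \<omega> * R \<omega> \<partial>M)"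
  have DR: "integrable M (\<lambda>\<omega>. D \<omega> * R \<omega>)" by (rule integrable_square_mult[OF assms])
  have nonneg: "d \<ge> 0" "r \<ge> 0" by (simp_all add: d_def r_def)
  have "p^2 \<le> (d * r)^2"
    using integral_mult_le_Cauchy_Schwarz[OF assms] by (simp add: d_def r_def p_def power_mult_distrib)
  then have p: "\<bar>p\<bar> \<le> d * r" using abs_le_square_iff[of p "d * r"] nonneg by simp
  have "(\<integral>\<omega>. (D \<omega> - R \<omega>)^2 \<partial>M) = (\<integral>\<omega>. (D \<omega>)^2 - 2 * (D \<omega> * R \<omega>) + (R \<omega>)^2 \<partial>M)"
    by (simp add: power2_eq_square algebra_simps)
  also have "\<dots> = d^2 - 2 * p + r^2" using assms DR by (simp add: d_def r_def p_def)
  finally have s: "(\<integral>\<omega>. (D \<omega> - R \<omega>)^2 \<partial>M) = d^2 - 2 * p + r^2" .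
  have "sqrt ((d - r)^2) \<le> sqrt (d^2 - 2 * p + r^2)" "sqrt (d^2 - 2 * p + r^2) \<le> sqrt ((d + r)^2)"
    using p by (auto intro!: real_sqrt_le_mono simp: power2_eq_square algebra_simps)
  then show ?thesis using nonneg unfolding s d_def[symmetric] r_def[symmetric] by (simp add: abs_le_iff)
qed

lemma powr_mult_2: "(x::real) powr (2 * a) = (x powr a)^2"
  by (simp only: mult_2 powr_add power2_eq_square)

lemma square_add_diff_le: "((p::real) + q - r)^2 \<le> 2 * p^2 + 4 * q^2 + 4 * r^2"
proof -
  have "0 \<le> (p - q + r)^2" "0 \<le> (q + r)^2" by simp_all
  then show ?thesis by (simp add: power2_eq_square algebra_simps)
qed

lemma normal_second_moment:
  assumes "0 < s"
    and D: "distributed M lborel Y (\<lambda>x. ennreal (normal_density 0 s x))"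
  shows "integrable M (\<lambda>\<omega>. (Y \<omega>)^2) \<and> (\<integral>\<omega>. (Y \<omega>)^2 \<partial>M) = s^2"
proof
  have "integrable lborel (\<lambda>x. normal_density 0 s x * (x - 0)^2)"
    by (rule integrable_normal_moment[OF \<open>0 < s\<close>])
  then show "integrable M (\<lambda>\<omega>. (Y \<omega>)^2)"
    using distributed_integrable[OF D, of "\<lambda>x. x^2"] by simp
  have "(\<integral>x. normal_density 0 s x * (x - 0)^(2*1) \<partial>lborel) = fact (2 * 1) / ((2 / s\<^sup>2)^1 * fact 1)"
    using integral_normal_moment_even[OF \<open>0 < s\<close>] by blast
  then have "(\<integral>x. normal_density 0 s x * x^2 \<partial>lborel) = s^2" using \<open>0 < s\<close> by simp
  then show "(\<integral>\<omega>. (Y \<omega>)^2 \<partial>M) = s^2"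
    using distributed_integral[OF D, of "\<lambda>x. x^2"] by simp
qed

lemma is_fBm_measurable: "is_fBm M H T B \<Longrightarrow> t \<in> {0..T} \<Longrightarrow> B t \<in> borel_measurable M"
  unfolding is_fBm_def by blast

lemma is_fBm_continuous: "is_fBm M H T B \<Longrightarrow> \<omega> \<in> space M \<Longrightarrow> continuous_on {0..T} (\<lambda>t. B t \<omega>)"
  unfolding is_fBm_def by blast

lemma fBm_linear_combination_second_moment:
  fixes I :: "nat set" and ts c :: "nat \<Rightarrow> real"
  assumes B: "is_fBm M H T B"
    and I: "finite I" and ts: "\<And>i. i \<in> I \<Longrightarrow> ts i \<in> {0..T}"
    and v: "v = (\<Sum>i\<in>I. \<Sum>j\<in>I. c i * c j * fbm_cov H (ts i) (ts j))" and "v \<ge> 0"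
  shows "integrable M (\<lambda>\<omega>. (\<Sum>i\<in>I. c i * B (ts i) \<omega>)^2) \<and>
         (\<integral>\<omega>. (\<Sum>i\<in>I. c i * B (ts i) \<omega>)^2 \<partial>M) = v"
proof -
  let ?Y = "\<lambda>\<omega>. \<Sum>i\<in>I. c i * B (ts i) \<omega>"
  have law: "(v = 0 \<longrightarrow> (AE \<omega> in M. ?Y \<omega> = 0)) \<and>
      (v > 0 \<longrightarrow> distributed M lborel ?Y (\<lambda>x. ennreal (normal_density 0 (sqrt v) x)))"
    using B I ts unfolding is_fBm_def v by (auto simp: Let_def)
  show ?thesis
  proof (cases "v = 0")
    case True
    have Y2: "(\<lambda>\<omega>. (?Y \<omega>)^2) \<in> borel_measurable M"
      using is_fBm_measurable[OF B] ts by measurable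
    have "AE \<omega> in M. (?Y \<omega>)^2 = 0" using law True by auto
    then show ?thesis
      using integrable_cong_AE[OF Y2, of "\<lambda>_. 0"] integral_cong_AE[OF Y2, of "\<lambda>_. 0"] True by simp
  next
    case False
    then have "v > 0" using \<open>v \<ge> 0\<close> by simp
    then show ?thesis using normal_second_moment[of "sqrt v" M ?Y] law by simp
  qed
qed

lemma fBm_second_moment:
  assumes "is_fBm M H T B" "t \<in> {0..T}" "0 < H"
  shows "integrable M (\<lambda>\<omega>. (B t \<omega>)^2) \<and> (\<integral>\<omega>. (B t \<omega>)^2 \<partial>M) = t powr (2*H)"
  using fBm_linear_combination_second_moment[OF assms(1), of "{0}" "\<lambda>_. t" "t powr (2*H)" "\<lambda>_. 1"] assms
  by (simp add: fbm_cov_def)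

lemma fBm_increment_second_moment:
  assumes "is_fBm M H T B" "s \<in> {0..T}" "t \<in> {0..T}" "0 < H"
  shows "integrable M (\<lambda>\<omega>. (B t \<omega> - B s \<omega>)^2) \<and>
    (\<integral>\<omega>. (B t \<omega> - B s \<omega>)^2 \<partial>M) = \<bar>t - s\<bar> powr (2*H)"
proof -
  let ?ts = "\<lambda>i::nat. if i = 0 then t else s"
  let ?c = "\<lambda>i::nat. if i = 0 then 1 else - 1 :: real"
  have "(\<Sum>i\<in>{0, 1}. \<Sum>j\<in>{0, 1}. ?c i * ?c j * fbm_cov H (?ts i) (?ts j)) = \<bar>t - s\<bar> powr (2*H)"
    using assms by (simp add: fbm_cov_def abs_minus_commute field_simps)
  from fBm_linear_combination_second_moment[OF assms(1), of "{0, 1}" ?ts, OF _ _ this[symmetric]] assms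
  show ?thesis by simp
qed

lemma integral_equal_subintervals:
  fixes f :: "real \<Rightarrow> real"
  assumes "h \<ge> 0" "continuous_on {a..a + real N * h} f"
  shows "integral {a..a + real N * h} f = (\<Sum>k<N. integral {a + real k * h..a + real (Suc k) * h} f)"
  using assms
proof (induction N)
  case (Suc N)
  have le: "a \<le> a + real N * h" "a + real N * h \<le> a + real (Suc N) * h"
    using Suc.prems(1) by (simp_all add: algebra_simps)
  have "continuous_on {a..a + real N * h} f"
    using Suc.prems(2) by (rule continuous_on_subset) (use le in auto)
  moreover have "integral {a..a + real (Suc N) * h} f
      = integral {a..a + real N * h} f + integral {a + real N * h..a + real (Suc N) * h} f"
    by (rule Henstock_Kurzweil_Integration.integral_combine[symmetric, OF le])
      (use Suc.prems in \<open>auto intro: integrable_continuous_interval\<close>)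
  ultimately show ?case using Suc by simp
qed simp

lemma left_endpoint_integral_error:
  fixes f :: "real \<Rightarrow> real"
  assumes "x \<le> y" "continuous_on {x..y} f" "\<And>s. s \<in> {x..y} \<Longrightarrow> \<bar>f s - f x\<bar> \<le> e"
  shows "\<bar>(y - x) * f x - integral {x..y} f\<bar> \<le> e * (y - x)"
proof -
  have "integral {x..y} (\<lambda>s. f s - f x) = integral {x..y} f - (y - x) * f x"
    using assms(1,2) by (subst Henstock_Kurzweil_Integration.integral_diff)
      (auto intro: integrable_continuous_interval simp: algebra_simps)
  moreover have "norm (integral {x..y} (\<lambda>s. f s - f x)) \<le> e * (y - x)"
    using assms by (intro integral_bound) (auto intro!: continuous_intros)
  ultimately show ?thesis by (simp add: abs_minus_commute)
qed

lemma riemann_sum_error_le: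
  fixes f :: "real \<Rightarrow> real"
  assumes "0 \<le> h" and f: "continuous_on {a..a + real N * h} f"
    and osc: "\<And>x s. x \<in> {a..a + real N * h} \<Longrightarrow> s \<in> {a..a + real N * h} \<Longrightarrow> x \<le> s \<Longrightarrow> s \<le> x + h \<Longrightarrow>
      \<bar>f s - f x\<bar> \<le> e"
  shows "\<bar>(\<Sum>k<N. h * f (a + real k * h)) - integral {a..a + real N * h} f\<bar> \<le> e * (real N * h)"
proof -
  let ?I = "{a..a + real N * h}"
  have cell: "{a + real k * h..a + real (Suc k) * h} \<subseteq> ?I" if "k < N" for k
    using mult_right_mono[of "real (Suc k)" "real N" h] that \<open>0 \<le> h\<close> by auto
  have err: "\<bar>h * f (a + real k * h) - integral {a + real k * h..a + real (Suc k) * h} f\<bar> \<le> e * h"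
    if "k < N" for k
  proof -
    let ?x = "a + real k * h" and ?y = "a + real (Suc k) * h"
    have len: "?y - ?x = h" by (simp add: algebra_simps)
    then have "?x \<in> ?I" using cell[OF that] \<open>0 \<le> h\<close> by auto
    then have "\<bar>f s - f ?x\<bar> \<le> e" if "s \<in> {?x..?y}" for s
      using osc[of ?x s] that cell[OF \<open>k < N\<close>] len by auto
    then show ?thesis
      using left_endpoint_integral_error[of ?x ?y f e] continuous_on_subset[OF f cell[OF that]] len \<open>0 \<le> h\<close>
      by simp
  qed
  have "\<bar>(\<Sum>k<N. h * f (a + real k * h)) - integral ?I f\<bar>
      = \<bar>\<Sum>k<N. h * f (a + real k * h) - integral {a + real k * h..a + real (Suc k) * h} f\<bar>"
    using integral_equal_subintervals[OF \<open>0 \<le> h\<close> f] by (simp add: sum_subtractf)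
  also have "\<dots> \<le> (\<Sum>k<N. e * h)"
    using err by (intro order.trans[OF sum_abs sum_mono]) auto
  finally show ?thesis by (simp add: mult.left_commute)
qed

lemma riemann_sum_LIMSEQ:
  fixes f :: "real \<Rightarrow> real"
  assumes ab: "a \<le> b" and f: "continuous_on {a..b} f"
  shows "(\<lambda>n. (b - a) / real (Suc n) * (\<Sum>k<Suc n. f (a + real k * ((b - a) / real (Suc n)))))
    \<longlonglongrightarrow> integral {a..b} f"
proof (rule LIMSEQ_I)
  fix \<epsilon> :: real assume "\<epsilon> > 0"
  define e where "e = \<epsilon> / (b - a + 1)"
  have "e > 0" using \<open>\<epsilon> > 0\<close> ab by (simp add: e_def)
  obtain d where "d > 0" and d: "\<And>x y. x \<in> {a..b} \<Longrightarrow> y \<in> {a..b} \<Longrightarrow> dist y x < d \<Longrightarrow> dist (f y) (f x) < e"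
    using compact_uniformly_continuous[OF f compact_Icc] \<open>e > 0\<close>
    unfolding uniformly_continuous_on_def by metis
  obtain N :: nat where N: "(b - a) / d < real N" using reals_Archimedean2 by blast
  show "\<exists>N. \<forall>n\<ge>N. norm ((b - a) / real (Suc n) * (\<Sum>k<Suc n. f (a + real k * ((b - a) / real (Suc n))))
      - integral {a..b} f) < \<epsilon>"
  proof (intro exI allI impI)
    fix n assume "N \<le> n"
    define h where "h = (b - a) / real (Suc n)"
    have "h \<ge> 0" using ab by (simp add: h_def)
    have "b - a < d * real (Suc n)"
      using N \<open>N \<le> n\<close> \<open>d > 0\<close> by (smt (verit) divide_less_eq mult.commute of_nat_Suc of_nat_mono)
    then have "h < d" unfolding h_def by (simp add: divide_less_eq mult.commute)
    have b: "a + real (Suc n) * h = b" unfolding h_def by simp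
    have "\<bar>f s - f x\<bar> \<le> e" if "x \<in> {a..b}" "s \<in> {a..b}" "x \<le> s" "s \<le> x + h" for x s
      using d[OF that(1,2)] that(3,4) \<open>h < d\<close> by (simp add: dist_real_def)
    then have "\<bar>(\<Sum>k<Suc n. h * f (a + real k * h)) - integral {a..b} f\<bar> \<le> e * (real (Suc n) * h)"
      using riemann_sum_error_le[of h a "Suc n" f e] \<open>h \<ge> 0\<close> f unfolding b by simp
    also have "\<dots> = e * (b - a)" using b by simp
    also have "\<dots> < \<epsilon>" unfolding e_def using \<open>\<epsilon> > 0\<close> ab by (simp add: field_simps)
    finally show "norm ((b - a) / real (Suc n) * (\<Sum>k<Suc n. f (a + real k * ((b - a) / real (Suc n))))
        - integral {a..b} f) < \<epsilon>"
      by (simp only: real_norm_def h_def[symmetric] sum_distrib_left)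
  qed
qed

lemma integral_square_sum_le:
  fixes Y :: "nat \<Rightarrow> 'a \<Rightarrow> real"
  assumes "\<And>k. k < N \<Longrightarrow> Y k \<in> borel_measurable M"
    and "\<And>k. k < N \<Longrightarrow> integrable M (\<lambda>\<omega>. (Y k \<omega>)^2)"
    and "\<And>k. k < N \<Longrightarrow> (\<integral>\<omega>. (Y k \<omega>)^2 \<partial>M) \<le> K"
  shows "integrable M (\<lambda>\<omega>. (\<Sum>k<N. Y k \<omega>)^2) \<and> (\<integral>\<omega>. (\<Sum>k<N. Y k \<omega>)^2 \<partial>M) \<le> real N^2 * K"
proof
  let ?G = "\<lambda>\<omega>. real N * (\<Sum>k<N. (Y k \<omega>)^2)"
  have G: "integrable M ?G" using assms(2) by (auto intro!: Bochner_Integration.integrable_sum)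
  have le: "(\<Sum>k<N. Y k \<omega>)^2 \<le> ?G \<omega>" for \<omega>
    using sum_squared_le_sum_of_squares[of "\<lambda>k. Y k \<omega>" "{..<N}"] by (simp add: mult.commute)
  show int: "integrable M (\<lambda>\<omega>. (\<Sum>k<N. Y k \<omega>)^2)"
    by (rule Bochner_Integration.integrable_bound[OF G])
      (use assms(1) le in \<open>auto intro!: AE_I2 order.trans[OF _ abs_ge_self]\<close>)
  have "(\<integral>\<omega>. (\<Sum>k<N. Y k \<omega>)^2 \<partial>M) \<le> (\<integral>\<omega>. ?G \<omega> \<partial>M)"
    by (rule integral_mono[OF int G le])
  also have "\<dots> = real N * (\<Sum>k<N. \<integral>\<omega>. (Y k \<omega>)^2 \<partial>M)"
    using assms(2) by (simp add: Bochner_Integration.integral_sum)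
  also have "\<dots> \<le> real N * (\<Sum>k<N. K)"
    using assms(3) by (intro mult_left_mono sum_mono) auto
  finally show "(\<integral>\<omega>. (\<Sum>k<N. Y k \<omega>)^2 \<partial>M) \<le> real N^2 * K"
    by (simp add: power2_eq_square)
qed

lemma integral_square_le_of_LIMSEQ:
  fixes S :: "nat \<Rightarrow> 'a \<Rightarrow> real"
  assumes S: "\<And>n. S n \<in> borel_measurable M"
    and lim: "\<And>\<omega>. \<omega> \<in> space M \<Longrightarrow> (\<lambda>n. S n \<omega>) \<longlonglongrightarrow> Z \<omega>"
    and int: "\<And>n. integrable M (\<lambda>\<omega>. (S n \<omega>)^2)"
    and bound: "\<And>n. (\<integral>\<omega>. (S n \<omega>)^2 \<partial>M) \<le> C"
  shows "Z \<in> borel_measurable M \<and> integrable M (\<lambda>\<omega>. (Z \<omega>)^2) \<and> (\<integral>\<omega>. (Z \<omega>)^2 \<partial>M) \<le> C"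
proof (intro conjI)
  show Z: "Z \<in> borel_measurable M" by (rule borel_measurable_LIMSEQ_real[OF lim S])
  have "0 \<le> (\<integral>\<omega>. (S 0 \<omega>)^2 \<partial>M)" by simp
  then have "0 \<le> C" using bound[of 0] by linarith
  have Sn: "(\<integral>\<^sup>+\<omega>. ennreal ((S n \<omega>)^2) \<partial>M) \<le> ennreal C" for n
    using nn_integral_eq_integral[OF int] bound by (simp add: ennreal_leI)
  have "(\<integral>\<^sup>+\<omega>. ennreal ((Z \<omega>)^2) \<partial>M) = (\<integral>\<^sup>+\<omega>. liminf (\<lambda>n. ennreal ((S n \<omega>)^2)) \<partial>M)"
    by (intro nn_integral_cong lim_imp_Liminf[symmetric] tendsto_ennrealI tendsto_power lim) simp_all
  also have "\<dots> \<le> liminf (\<lambda>n. \<integral>\<^sup>+\<omega>. ennreal ((S n \<omega>)^2) \<partial>M)"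
    by (rule nn_integral_liminf) (use S in measurable)
  also have "\<dots> \<le> limsup (\<lambda>n. \<integral>\<^sup>+\<omega>. ennreal ((S n \<omega>)^2) \<partial>M)"
    by (rule Liminf_le_Limsup) simp
  also have "\<dots> \<le> ennreal C" by (rule Limsup_bounded) (simp add: Sn)
  finally have Z2: "(\<integral>\<^sup>+\<omega>. ennreal ((Z \<omega>)^2) \<partial>M) \<le> ennreal C" .
  show "integrable M (\<lambda>\<omega>. (Z \<omega>)^2)"
    using Z2 by (intro integrableI_nonneg) (use Z in \<open>auto simp: top_unique less_top[symmetric] dest: order.strict_trans1\<close>)
  have "(\<integral>\<omega>. (Z \<omega>)^2 \<partial>M) = enn2real (\<integral>\<^sup>+\<omega>. ennreal ((Z \<omega>)^2) \<partial>M)"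
    by (rule integral_eq_nn_integral) (use Z in auto)
  also have "\<dots> \<le> C" by (rule enn2real_leI) (use \<open>0 \<le> C\<close> Z2 in auto)
  finally show "(\<integral>\<omega>. (Z \<omega>)^2 \<partial>M) \<le> C" .
qed

lemma pathwise_integral_second_moment:
  fixes Y :: "real \<Rightarrow> 'a \<Rightarrow> real"
  assumes "a \<le> b"
    and meas: "\<And>t. t \<in> {a..b} \<Longrightarrow> Y t \<in> borel_measurable M"
    and cont: "\<And>\<omega>. \<omega> \<in> space M \<Longrightarrow> continuous_on {a..b} (\<lambda>t. Y t \<omega>)"
    and int: "\<And>t. t \<in> {a..b} \<Longrightarrow> integrable M (\<lambda>\<omega>. (Y t \<omega>)^2)"
    and bound: "\<And>t. t \<in> {a..b} \<Longrightarrow> (\<integral>\<omega>. (Y t \<omega>)^2 \<partial>M) \<le> K"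
  shows "(\<lambda>\<omega>. integral {a..b} (\<lambda>t. Y t \<omega>)) \<in> borel_measurable M \<and>
    integrable M (\<lambda>\<omega>. (integral {a..b} (\<lambda>t. Y t \<omega>))^2) \<and>
    (\<integral>\<omega>. (integral {a..b} (\<lambda>t. Y t \<omega>))^2 \<partial>M) \<le> (b - a)^2 * K"
proof (rule integral_square_le_of_LIMSEQ)
  define h where "h n = (b - a) / real (Suc n)" for n
  define S where "S n \<omega> = h n * (\<Sum>k<Suc n. Y (a + real k * h n) \<omega>)" for n \<omega>
  have node: "a + real k * h n \<in> {a..b}" if "k < Suc n" for k n
  proof -
    have "real k * h n \<le> real (Suc n) * h n"
      using that \<open>a \<le> b\<close> by (intro mult_right_mono) (auto simp: h_def)
    then show ?thesis using \<open>a \<le> b\<close> by (simp add: h_def)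
  qed
  have sum: "integrable M (\<lambda>\<omega>. (\<Sum>k<Suc n. Y (a + real k * h n) \<omega>)^2) \<and>
      (\<integral>\<omega>. (\<Sum>k<Suc n. Y (a + real k * h n) \<omega>)^2 \<partial>M) \<le> real (Suc n)^2 * K" for n
    using node by (intro integral_square_sum_le meas int bound)
  show "S n \<in> borel_measurable M" for n
    unfolding S_def using meas node by measurable
  show "(\<lambda>n. S n \<omega>) \<longlonglongrightarrow> integral {a..b} (\<lambda>t. Y t \<omega>)" if "\<omega> \<in> space M" for \<omega>
    unfolding S_def h_def by (rule riemann_sum_LIMSEQ[OF \<open>a \<le> b\<close> cont[OF that]])
  show "integrable M (\<lambda>\<omega>. (S n \<omega>)^2)" for n
    using sum unfolding S_def by (simp add: power_mult_distrib)
  show "(\<integral>\<omega>. (S n \<omega>)^2 \<partial>M) \<le> (b - a)^2 * K" for n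
  proof -
    have "(\<integral>\<omega>. (S n \<omega>)^2 \<partial>M) = (h n)^2 * (\<integral>\<omega>. (\<Sum>k<Suc n. Y (a + real k * h n) \<omega>)^2 \<partial>M)"
      unfolding S_def by (simp add: power_mult_distrib)
    also have "\<dots> \<le> (h n)^2 * (real (Suc n)^2 * K)" using sum by (intro mult_left_mono) auto
    also have "\<dots> = (b - a)^2 * K" by (simp add: h_def power_divide)
    finally show ?thesis .
  qed
qed

lemma linear_integral_equation_primitive:
  fixes x b :: "real \<Rightarrow> real"
  assumes "\<mu> \<noteq> 0" and cx: "continuous_on {0..T} x" and cb: "continuous_on {0..T} b"
    and eq: "\<And>t. t \<in> {0..T} \<Longrightarrow> x t = x0 - \<mu> * integral {0..t} x + \<theta> * b t"
    and t: "t \<in> {0..T}"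
  shows "exp (\<mu> * t) * integral {0..t} x
    = x0 * (exp (\<mu> * t) - 1) / \<mu> + \<theta> * integral {0..t} (\<lambda>u. exp (\<mu> * u) * b u)"
proof -
  define F where "F s = exp (\<mu> * s) * integral {0..s} x - x0 * (exp (\<mu> * s) - 1) / \<mu>
    - \<theta> * integral {0..s} (\<lambda>u. exp (\<mu> * u) * b u)" for s
  have cg: "continuous_on {0..T} (\<lambda>u. exp (\<mu> * u) * b u)" using cb by (intro continuous_intros)
  have "(F has_real_derivative 0) (at s within {0..T})" if s: "s \<in> {0..T}" for s
  proof -
    have "(F has_real_derivative exp (\<mu> * s) * x s + exp (\<mu> * s) * \<mu> * integral {0..s} x
        - x0 * (exp (\<mu> * s) * \<mu> - 0) / \<mu> - \<theta> * (exp (\<mu> * s) * b s)) (at s within {0..T})"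
      unfolding F_def
      by (intro DERIV_diff DERIV_mult' DERIV_cdivide DERIV_cmult DERIV_const
          integral_has_real_derivative[OF cx s] integral_has_real_derivative[OF cg s])
        (auto intro!: derivative_eq_intros)
    moreover have "exp (\<mu> * s) * x s + exp (\<mu> * s) * \<mu> * integral {0..s} x
        - x0 * (exp (\<mu> * s) * \<mu> - 0) / \<mu> - \<theta> * (exp (\<mu> * s) * b s)
        = exp (\<mu> * s) * (x s + \<mu> * integral {0..s} x - x0 - \<theta> * b s)"
      using \<open>\<mu> \<noteq> 0\<close> by (simp add: algebra_simps)
    moreover have "x s + \<mu> * integral {0..s} x - x0 - \<theta> * b s = 0" using eq[OF s] by simp
    ultimately show ?thesis by simp
  qed
  then obtain c where c: "\<And>s. s \<in> {0..T} \<Longrightarrow> F s = c"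
    using has_field_derivative_zero_constant[of "{0..T}" F] by auto
  have "0 \<in> {0..T}" using t by simp
  then have "F t = F 0" using c[OF t] c by simp
  then show ?thesis by (simp add: F_def)
qed

lemma linear_integral_equation_solution:
  fixes x b :: "real \<Rightarrow> real"
  assumes "\<mu> \<noteq> 0" and "continuous_on {0..T} x" and "continuous_on {0..T} b"
    and eq: "\<And>t. t \<in> {0..T} \<Longrightarrow> x t = x0 - \<mu> * integral {0..t} x + \<theta> * b t"
    and t: "t \<in> {0..T}"
  shows "x t = x0 * exp (- \<mu> * t) + \<theta> * b t - \<theta> * \<mu> * integral {0..t} (\<lambda>u. exp (- \<mu> * (t - u)) * b u)"
proof -
  define J where "J = integral {0..t} (\<lambda>u. exp (\<mu> * u) * b u)"
  define E where "E = exp (- \<mu> * t)"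
  have E: "E * exp (\<mu> * t) = 1" by (simp add: E_def flip: exp_add)
  have "(\<lambda>u. exp (- \<mu> * (t - u)) * b u) = (\<lambda>u. E * (exp (\<mu> * u) * b u))"
  proof
    fix u
    have "exp (- \<mu> * (t - u)) = E * exp (\<mu> * u)"
      by (simp add: E_def algebra_simps flip: exp_add)
    then show "exp (- \<mu> * (t - u)) * b u = E * (exp (\<mu> * u) * b u)" by simp
  qed
  then have conv: "integral {0..t} (\<lambda>u. exp (- \<mu> * (t - u)) * b u) = E * J"
    by (simp add: J_def)
  have prim: "\<mu> * (exp (\<mu> * t) * integral {0..t} x) = x0 * (exp (\<mu> * t) - 1) + \<theta> * \<mu> * J"
    using linear_integral_equation_primitive[OF assms] \<open>\<mu> \<noteq> 0\<close>
    by (simp add: J_def distrib_left)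
  have "\<mu> * integral {0..t} x = E * (\<mu> * (exp (\<mu> * t) * integral {0..t} x))"
    using E by (metis mult.assoc mult.left_commute mult_1)
  also have "\<dots> = x0 - x0 * E + \<theta> * \<mu> * (E * J)"
    unfolding prim using E by (simp add: algebra_simps)
  finally show ?thesis unfolding conv E_def[symmetric] using eq[OF t] by simp
qed

lemma sigma2_nonneg: "0 \<le> sigma2 M X s t"
  unfolding sigma2_def by simp

locale fractional_OU = prob_space M for M :: "'a measure" +
  fixes B X :: "real \<Rightarrow> 'a \<Rightarrow> real" and T \<mu> \<theta> x0 H :: real
  assumes T_pos: "T > 0" and mu_pos: "\<mu> > 0" and theta_pos: "\<theta> > 0"
    and H_pos: "0 < H" and H_less_1: "H < 1"
    and fBm: "is_fBm M H T B"
    and X_measurable: "\<And>t. t \<in> {0..T} \<Longrightarrow> X t \<in> borel_measurable M"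
    and X_continuous: "\<And>\<omega>. \<omega> \<in> space M \<Longrightarrow> continuous_on {0..T} (\<lambda>t. X t \<omega>)"
    and X_equation: "\<And>\<omega> t. \<omega> \<in> space M \<Longrightarrow> t \<in> {0..T} \<Longrightarrow>
      X t \<omega> = x0 - \<mu> * integral {0..t} (\<lambda>s. X s \<omega>) + \<theta> * B t \<omega>"
begin

definition fBm_convolution :: "real \<Rightarrow> 'a \<Rightarrow> real" where
  "fBm_convolution t \<omega> = integral {0..t} (\<lambda>u. exp (- \<mu> * (t - u)) * B u \<omega>)"

definition second_moment_bound :: real where
  "second_moment_bound = 2 * x0^2 + 4 * \<theta>^2 * exp (2 * \<mu> * T) * T powr (2*H) * (1 + \<mu>^2 * T^2)"

lemma second_moment_bound_nonneg: "0 \<le> second_moment_bound"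
  unfolding second_moment_bound_def by simp

lemma X_explicit:
  assumes "\<omega> \<in> space M" "t \<in> {0..T}"
  shows "X t \<omega> = x0 * exp (- \<mu> * t) + \<theta> * B t \<omega> - \<theta> * \<mu> * fBm_convolution t \<omega>"
  unfolding fBm_convolution_def
  using linear_integral_equation_solution[of \<mu> T "\<lambda>t. X t \<omega>" "\<lambda>t. B t \<omega>" x0 \<theta> t] assms mu_pos
    X_continuous X_equation is_fBm_continuous[OF fBm]
  by simp

lemma fBm_convolution_second_moment:
  assumes t: "t \<in> {0..T}"
  shows "fBm_convolution t \<in> borel_measurable M \<and> integrable M (\<lambda>\<omega>. (fBm_convolution t \<omega>)^2) \<and>
    (\<integral>\<omega>. (fBm_convolution t \<omega>)^2 \<partial>M) \<le> t^2 * T powr (2*H)"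
proof -
  have sub: "{0..t} \<subseteq> {0..T}" using t by auto
  let ?Y = "\<lambda>u \<omega>. exp (- \<mu> * (t - u)) * B u \<omega>"
  have moment: "integrable M (\<lambda>\<omega>. (?Y u \<omega>)^2) \<and> (\<integral>\<omega>. (?Y u \<omega>)^2 \<partial>M) \<le> T powr (2*H)"
    if u: "u \<in> {0..t}" for u
  proof -
    have B2: "integrable M (\<lambda>\<omega>. (B u \<omega>)^2) \<and> (\<integral>\<omega>. (B u \<omega>)^2 \<partial>M) = u powr (2*H)"
      using fBm_second_moment[OF fBm _ H_pos] u sub by auto
    have "(exp (- \<mu> * (t - u)))^2 \<le> 1" using u mu_pos by (simp add: power_le_one)
    moreover have "u powr (2*H) \<le> T powr (2*H)" using u t H_pos by (intro powr_mono2) auto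
    ultimately have "(exp (- \<mu> * (t - u)))^2 * u powr (2*H) \<le> 1 * T powr (2*H)"
      by (intro mult_mono) auto
    then show ?thesis using B2 by (simp add: power_mult_distrib)
  qed
  have "continuous_on {0..t} (\<lambda>u. ?Y u \<omega>)" if "\<omega> \<in> space M" for \<omega>
    using continuous_on_subset[OF is_fBm_continuous[OF fBm that] sub] by (intro continuous_intros)
  then show ?thesis
    using pathwise_integral_second_moment[of 0 t ?Y M "T powr (2*H)"] t moment
      is_fBm_measurable[OF fBm] sub
    unfolding fBm_convolution_def by auto
qed

lemma X_square_le:
  assumes "\<omega> \<in> space M" "t \<in> {0..T}"
  shows "(X t \<omega>)^2 \<le> 2 * x0^2 + 4 * \<theta>^2 * (B t \<omega>)^2 + 4 * (\<theta> * \<mu>)^2 * (fBm_convolution t \<omega>)^2"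
proof -
  have "(x0 * exp (- \<mu> * t))^2 \<le> x0^2"
    using assms(2) mu_pos by (simp add: power_mult_distrib power_le_one mult_left_le)
  then show ?thesis
    using square_add_diff_le[of "x0 * exp (- \<mu> * t)" "\<theta> * B t \<omega>" "\<theta> * \<mu> * fBm_convolution t \<omega>"]
    unfolding X_explicit[OF assms] by (simp add: power_mult_distrib)
qed

lemma X_second_moment:
  assumes t: "t \<in> {0..T}"
  shows "integrable M (\<lambda>\<omega>. (X t \<omega>)^2) \<and> (\<integral>\<omega>. (X t \<omega>)^2 \<partial>M) \<le> second_moment_bound"
proof -
  let ?J = "fBm_convolution t"
  define G where "G \<omega> = 2 * x0^2 + 4 * \<theta>^2 * (B t \<omega>)^2 + 4 * (\<theta> * \<mu>)^2 * (?J \<omega>)^2" for \<omega>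
  have B2: "integrable M (\<lambda>\<omega>. (B t \<omega>)^2) \<and> (\<integral>\<omega>. (B t \<omega>)^2 \<partial>M) = t powr (2*H)"
    by (rule fBm_second_moment[OF fBm t H_pos])
  note J2 = fBm_convolution_second_moment[OF t]
  have G: "integrable M G" unfolding G_def using B2 J2 by simp
  have XG: "(X t \<omega>)^2 \<le> G \<omega>" if "\<omega> \<in> space M" for \<omega>
    unfolding G_def using X_square_le[OF that t] .
  have X: "integrable M (\<lambda>\<omega>. (X t \<omega>)^2)"
    by (rule Bochner_Integration.integrable_bound[OF G])
      (use X_measurable[OF t] XG in \<open>auto intro!: AE_I2 order.trans[OF _ abs_ge_self]\<close>)
  have "(\<integral>\<omega>. (X t \<omega>)^2 \<partial>M) \<le> integral\<^sup>L M G"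
    by (rule integral_mono[OF X G XG])
  also have "\<dots> = 2 * x0^2 + 4 * \<theta>^2 * t powr (2*H) + 4 * (\<theta> * \<mu>)^2 * (\<integral>\<omega>. (?J \<omega>)^2 \<partial>M)"
    unfolding G_def using B2 J2 by (simp add: prob_space)
  also have "\<dots> \<le> 2 * x0^2 + 4 * \<theta>^2 * T powr (2*H) * (1 + \<mu>^2 * T^2)"
  proof -
    have "t powr (2*H) \<le> T powr (2*H)" using t H_pos by (intro powr_mono2) auto
    moreover have "(\<integral>\<omega>. (?J \<omega>)^2 \<partial>M) \<le> T^2 * T powr (2*H)"
    proof -
      have "t^2 * T powr (2*H) \<le> T^2 * T powr (2*H)" using t by (intro mult_right_mono power_mono) auto
      then show ?thesis using J2 by linarith
    qed
    ultimately have "4 * \<theta>^2 * t powr (2*H) + 4 * (\<theta> * \<mu>)^2 * (\<integral>\<omega>. (?J \<omega>)^2 \<partial>M)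
        \<le> 4 * \<theta>^2 * T powr (2*H) + 4 * (\<theta> * \<mu>)^2 * (T^2 * T powr (2*H))"
      by (intro add_mono mult_left_mono) auto
    moreover have "4 * \<theta>^2 * T powr (2*H) * (1 + \<mu>^2 * T^2)
        = 4 * \<theta>^2 * T powr (2*H) + 4 * (\<theta> * \<mu>)^2 * (T^2 * T powr (2*H))"
      by (simp add: algebra_simps power_mult_distrib)
    ultimately show ?thesis by linarith
  qed
  also have "\<dots> \<le> second_moment_bound"
  proof -
    have "1 \<le> exp (2 * \<mu> * T)" using mu_pos T_pos by simp
    then have "4 * \<theta>^2 * T powr (2*H) * (1 + \<mu>^2 * T^2) * 1
        \<le> 4 * \<theta>^2 * T powr (2*H) * (1 + \<mu>^2 * T^2) * exp (2 * \<mu> * T)"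
      by (intro mult_left_mono) auto
    then show ?thesis unfolding second_moment_bound_def by (simp add: ac_simps)
  qed
  finally show ?thesis using X by simp
qed

lemma X_increment:
  assumes "\<omega> \<in> space M" "0 \<le> t" "0 \<le> h" "t + h \<le> T"
  shows "X (t + h) \<omega> - X t \<omega> = \<theta> * (B (t + h) \<omega> - B t \<omega>) - \<mu> * integral {t..t + h} (\<lambda>s. X s \<omega>)"
proof -
  have "continuous_on {0..t + h} (\<lambda>s. X s \<omega>)"
    using X_continuous[OF assms(1)] by (rule continuous_on_subset) (use assms in auto)
  then have "integral {0..t} (\<lambda>s. X s \<omega>) + integral {t..t + h} (\<lambda>s. X s \<omega>) = integral {0..t + h} (\<lambda>s. X s \<omega>)"
    by (intro Henstock_Kurzweil_Integration.integral_combine)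
      (use assms in \<open>auto intro: integrable_continuous_interval\<close>)
  then have "X (t + h) \<omega> = x0 - \<mu> * (integral {0..t} (\<lambda>s. X s \<omega>) + integral {t..t + h} (\<lambda>s. X s \<omega>))
      + \<theta> * B (t + h) \<omega>"
    using X_equation[OF assms(1), of "t + h"] assms by simp
  then show ?thesis
    using X_equation[OF assms(1), of t] assms by (simp add: algebra_simps)
qed

lemma integral_X_second_moment:
  assumes "0 \<le> t" "0 \<le> h" "t + h \<le> T"
  shows "(\<lambda>\<omega>. integral {t..t + h} (\<lambda>s. X s \<omega>)) \<in> borel_measurable M \<and>
    integrable M (\<lambda>\<omega>. (integral {t..t + h} (\<lambda>s. X s \<omega>))^2) \<and>
    (\<integral>\<omega>. (integral {t..t + h} (\<lambda>s. X s \<omega>))^2 \<partial>M) \<le> h^2 * second_moment_bound"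
proof -
  have sub: "{t..t + h} \<subseteq> {0..T}" using assms by auto
  show ?thesis
    using pathwise_integral_second_moment[of t "t + h" X M second_moment_bound] assms sub
      X_measurable X_second_moment continuous_on_subset[OF X_continuous sub]
    by auto
qed

lemma sigmaX_increment_deviation:
  assumes "0 \<le> t" "0 < h" "t + h \<le> T"
  shows "\<bar>sigmaX M X t (t + h) - \<theta> * h powr H\<bar> \<le> \<mu> * sqrt second_moment_bound * h"
proof -
  define D where "D \<omega> = \<theta> * (B (t + h) \<omega> - B t \<omega>)" for \<omega>
  define R where "R \<omega> = \<mu> * integral {t..t + h} (\<lambda>s. X s \<omega>)" for \<omega>
  have tT: "t \<in> {0..T}" "t + h \<in> {0..T}" using assms by auto
  have B2: "integrable M (\<lambda>\<omega>. (B (t + h) \<omega> - B t \<omega>)^2) \<and>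
      (\<integral>\<omega>. (B (t + h) \<omega> - B t \<omega>)^2 \<partial>M) = h powr (2*H)"
    using fBm_increment_second_moment[OF fBm tT H_pos] \<open>0 < h\<close> by simp
  note I2 = integral_X_second_moment[OF assms(1) less_imp_le[OF assms(2)] assms(3)]
  have D: "D \<in> borel_measurable M" "integrable M (\<lambda>\<omega>. (D \<omega>)^2)"
    using is_fBm_measurable[OF fBm] tT B2 unfolding D_def by (auto simp: power_mult_distrib)
  have R: "R \<in> borel_measurable M" "integrable M (\<lambda>\<omega>. (R \<omega>)^2)"
    using I2 unfolding R_def by (auto simp: power_mult_distrib)
  have "(\<integral>\<omega>. (D \<omega>)^2 \<partial>M) = (\<theta> * h powr H)^2"
    using B2 unfolding D_def by (simp add: power_mult_distrib powr_mult_2)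
  then have sD: "sqrt (\<integral>\<omega>. (D \<omega>)^2 \<partial>M) = \<theta> * h powr H" using theta_pos by simp
  have "(\<integral>\<omega>. (R \<omega>)^2 \<partial>M) = \<mu>^2 * (\<integral>\<omega>. (integral {t..t + h} (\<lambda>s. X s \<omega>))^2 \<partial>M)"
    unfolding R_def by (simp add: power_mult_distrib)
  also have "\<dots> \<le> \<mu>^2 * (h^2 * second_moment_bound)"
    using I2 by (intro mult_left_mono) auto
  also have "\<dots> = (\<mu> * sqrt second_moment_bound * h)^2"
    using second_moment_bound_nonneg by (simp add: power_mult_distrib)
  finally have "(\<integral>\<omega>. (R \<omega>)^2 \<partial>M) \<le> (\<mu> * sqrt second_moment_bound * h)^2" .
  then have "sqrt (\<integral>\<omega>. (R \<omega>)^2 \<partial>M) \<le> sqrt ((\<mu> * sqrt second_moment_bound * h)^2)"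
    by (rule real_sqrt_le_mono)
  then have sR: "sqrt (\<integral>\<omega>. (R \<omega>)^2 \<partial>M) \<le> \<mu> * sqrt second_moment_bound * h"
    using mu_pos assms(2) second_moment_bound_nonneg by simp
  have "sigmaX M X t (t + h) = sqrt (\<integral>\<omega>. (D \<omega> - R \<omega>)^2 \<partial>M)"
    unfolding sigmaX_def sigma2_def
    by (intro arg_cong[where f = sqrt] Bochner_Integration.integral_cong)
      (simp_all add: X_increment assms less_imp_le D_def R_def)
  then show ?thesis using sqrt_integral_square_diff_le[OF D(1) R(1) D(2) R(2)] sD sR by simp
qed

lemma sigmaX_origin_le:
  assumes "0 < h" "h \<le> 1" "h \<le> T"
  shows "sigmaX M X 0 h \<le> (\<theta> + \<mu> * sqrt second_moment_bound) * h powr H"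
proof -
  have "sigmaX M X 0 h \<le> \<theta> * h powr H + \<mu> * sqrt second_moment_bound * h"
    using sigmaX_increment_deviation[of 0 h] assms by simp
  moreover have "h \<le> h powr H"
    using powr_mono'[of H 1 h] assms H_less_1 by simp
  then have "\<mu> * sqrt second_moment_bound * h \<le> \<mu> * sqrt second_moment_bound * h powr H"
    using mu_pos second_moment_bound_nonneg by (intro mult_left_mono) auto
  ultimately show ?thesis by (simp add: distrib_right)
qed

lemma sigma2_origin_le:
  assumes "0 < h" "h \<le> 1" "h \<le> T"
  shows "sigma2 M X 0 h \<le> (\<theta> + \<mu> * sqrt second_moment_bound)^2 * h powr (2*H)"
proof -
  have "sigma2 M X 0 h = (sigmaX M X 0 h)^2"
    unfolding sigmaX_def using sigma2_nonneg[of M X 0 h] by simp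
  also have "\<dots> \<le> ((\<theta> + \<mu> * sqrt second_moment_bound) * h powr H)^2"
    using sigmaX_origin_le[OF assms] by (intro power_mono) (simp_all add: sigmaX_def sigma2_nonneg)
  finally show ?thesis by (simp add: power_mult_distrib powr_mult_2)
qed

lemma cond_C1_holds: "cond_C1 M X H"
  unfolding cond_C1_def
proof (rule bigoI)
  show "\<forall>\<^sub>F h in at_right 0. norm (sigmaX M X 0 h) \<le> (\<theta> + \<mu> * sqrt second_moment_bound) * norm (h powr H)"
    unfolding eventually_at_right_field
    using sigmaX_origin_le T_pos by (intro exI[of _ "min 1 T"]) (auto simp: sigmaX_def sigma2_nonneg)
qed

lemma sigmaX_ratio_deviation:
  assumes "0 \<le> t" "0 < h" "t + h \<le> T"
  shows "\<bar>sigmaX M X t (t + h) / (\<theta> * h powr H) - 1\<bar>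
    \<le> \<mu> * sqrt second_moment_bound / \<theta> * h powr (1 - H)"
proof -
  have pos: "0 < \<theta> * h powr H" using theta_pos assms(2) by simp
  have "sigmaX M X t (t + h) / (\<theta> * h powr H) - 1
      = (sigmaX M X t (t + h) - \<theta> * h powr H) / (\<theta> * h powr H)"
    using theta_pos assms(2) by (simp add: diff_divide_distrib)
  then have "\<bar>sigmaX M X t (t + h) / (\<theta> * h powr H) - 1\<bar>
      = \<bar>sigmaX M X t (t + h) - \<theta> * h powr H\<bar> / (\<theta> * h powr H)"
    using pos by simp
  moreover have "h powr (1 - H) = h / h powr H" using assms(2) by (simp add: powr_diff)
  then have "\<mu> * sqrt second_moment_bound * h / (\<theta> * h powr H)
      = \<mu> * sqrt second_moment_bound / \<theta> * h powr (1 - H)"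
    using pos by (simp add: field_simps)
  moreover have "\<bar>sigmaX M X t (t + h) - \<theta> * h powr H\<bar> / (\<theta> * h powr H)
      \<le> \<mu> * sqrt second_moment_bound * h / (\<theta> * h powr H)"
    using sigmaX_increment_deviation[OF assms] pos by (intro divide_right_mono) auto
  ultimately show ?thesis by simp
qed

lemma cond_C2_holds: "cond_C2 M X T H \<theta>"
  unfolding cond_C2_def
proof (intro ballI allI impI)
  fix \<phi> :: "real \<Rightarrow> real" and \<epsilon> :: real assume \<phi>: "\<phi> \<in> Psi T" and "\<epsilon> > 0"
  define c where "c = \<mu> * sqrt second_moment_bound / \<theta>"
  have "((\<lambda>\<delta>. c * \<delta> powr (1 - H)) \<longlongrightarrow> c * 0) (at_right 0)"
    using H_less_1
    by (intro tendsto_mult tendsto_const tendsto_zero_powrI)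
      (auto intro: tendsto_ident_at eventually_at_rightI[of 0 1])
  then have "\<forall>\<^sub>F \<delta> in at_right 0. c * \<delta> powr (1 - H) < \<epsilon>"
    using \<open>\<epsilon> > 0\<close> by (auto dest: order_tendstoD)
  moreover have "\<forall>\<^sub>F \<delta> in at_right 0. \<delta> < T"
    using T_pos by (intro eventually_at_rightI[of 0 T]) auto
  moreover note eventually_at_right_less
  ultimately show "\<forall>\<^sub>F \<delta> in at_right 0. \<forall>t h. \<phi> \<delta> \<le> t \<and> t \<le> T - \<delta> \<and> 0 < h \<and> h \<le> \<delta> \<longrightarrow>
      \<bar>sigmaX M X t (t + h) / (\<theta> * h powr H) - 1\<bar> \<le> \<epsilon>"
  proof eventually_elim
    case (elim \<delta>)
    show ?case
    proof (intro allI impI)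
      fix t h assume th: "\<phi> \<delta> \<le> t \<and> t \<le> T - \<delta> \<and> 0 < h \<and> h \<le> \<delta>"
      have "0 \<le> \<phi> \<delta>" using \<phi> elim unfolding Psi_def by auto
      then have "0 \<le> t" "t + h \<le> T" using th by auto
      moreover have "c * h powr (1 - H) \<le> c * \<delta> powr (1 - H)"
        using th H_less_1 mu_pos theta_pos second_moment_bound_nonneg
        by (intro mult_left_mono powr_mono2) (auto simp: c_def)
      ultimately show "\<bar>sigmaX M X t (t + h) / (\<theta> * h powr H) - 1\<bar> \<le> \<epsilon>"
        using sigmaX_ratio_deviation[of t h] th elim unfolding c_def by linarith
    qed
  qed
qed

end

theorem mainTheorem14:
  fixes M :: "'a measure" and B X :: "real \<Rightarrow> 'a \<Rightarrow> real"
    and T \<mu> \<theta> x0 H :: real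
  assumes "prob_space M"
    and "T > 0" and "\<mu> > 0" and "\<theta> > 0" and "0 < H" and "H < 1"
    and "is_fBm M H T B"
    and "\<forall>t\<in>{0..T}. X t \<in> borel_measurable M"
    and "\<forall>\<omega>\<in>space M. continuous_on {0..T} (\<lambda>t. X t \<omega>) \<and>
           (\<forall>t\<in>{0..T}. X t \<omega> = x0 - \<mu> * integral {0..t} (\<lambda>s. X s \<omega>) + \<theta> * B t \<omega>)"
  shows "(\<forall>t\<in>{0..T}. integrable M (\<lambda>\<omega>. (X t \<omega>)^2) \<and>
           integral\<^sup>L M (\<lambda>\<omega>. (X t \<omega>)^2)
             \<le> 2 * x0^2 + 4 * \<theta>^2 * exp (2 * \<mu> * T) * T powr (2*H) * (1 + \<mu>^2 * T^2))
       \<and> (\<exists>C h0. h0 > 0 \<and> (\<forall>h\<in>{0<..h0}. sigma2 M X 0 h \<le> C * h powr (2*H)))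
       \<and> cond_C1 M X H
       \<and> cond_C2 M X T H \<theta>"
proof -
  interpret fractional_OU M B X T \<mu> \<theta> x0 H
    by (intro fractional_OU.intro fractional_OU_axioms.intro) (use assms in auto)
  have "\<forall>h\<in>{0<..min 1 T}. sigma2 M X 0 h \<le> (\<theta> + \<mu> * sqrt second_moment_bound)^2 * h powr (2*H)"
    using sigma2_origin_le by auto
  moreover have "min 1 T > 0" using T_pos by simp
  ultimately show ?thesis
    using X_second_moment cond_C1_holds cond_C2_holds unfolding second_moment_bound_def by blast
qed

end
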